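(* Let $V$ be a finite-dimensional vector space over $\mathbb{F}_q$, $\mathcal{F}$ a projective point family in $V$ of size $\nu$, $\varphi:\mathbb{F}_q^\nu\to V$ a parent function of $\mathcal{F}$ with parent code $P=\ker\varphi$, and $r=\lfloor (d_H(P)-1)/2\rfloor$. Let $x\in\mathbb{F}_q^\nu$. Then for every integer $t\le r$, $\varphi$ restricts to a bijection from the Hamming sphere $S^H_t(x)=\{y:d_H(x,y)=t\}\subseteq\mathbb{F}_q^\nu$ onto the sphere $S^{\mathcal{F}}_t(\varphi(x))=\{\varphi(x)+v: v\in V,\ \operatorname{wt}_{\mathcal{F}}(v)=t\}\subseteq V$.
   Context: A projective point family is a set of pairwise linearly independent nonzero vectors; $\operatorname{wt}_{\mathcal{F}}(v)=\min(\{|I|:I\subseteq\mathcal{F},v\in\langle I\rangle\}\cup\{\infty\})$. A parent function of $\mathcal{F}$ is a linear map $\varphi:\mathbb{F}_q^\nu\to V$ with $\{\langle\varphi(e_i)\rangle\}_{i=1}^\nu=\{\langle f\rangle: f\in\mathcal{F}\}$. $d_H(P)$ is the minimum Hamming distance between distinct elements of $P$. *)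

theory Defs
  imports Complex_Main "HOL-Library.Extended_Nat"
begin

text \<open>The coordinate space F_q^nu is represented by functions nat => 'a vanishing
  outside the index set {..<nu}.\<close>

definition coord_space :: "nat \<Rightarrow> (nat \<Rightarrow> 'a::zero) set" where
  "coord_space \<nu> = {x. \<forall>i. \<nu> \<le> i \<longrightarrow> x i = 0}"

definition unit_vec :: "nat \<Rightarrow> nat \<Rightarrow> 'a::{zero,one}" where
  "unit_vec i = (\<lambda>j. if j = i then 1 else 0)"

definition hamming_dist :: "nat \<Rightarrow> (nat \<Rightarrow> 'a) \<Rightarrow> (nat \<Rightarrow> 'a) \<Rightarrow> nat" where
  "hamming_dist \<nu> x y = card {i. i < \<nu> \<and> x i \<noteq> y i}"

text \<open>Minimum Hamming distance of a code P; infinity if P has fewer than two elements.\<close>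
definition min_hamming_dist :: "nat \<Rightarrow> (nat \<Rightarrow> 'a) set \<Rightarrow> enat" where
  "min_hamming_dist \<nu> P =
     Inf {enat (hamming_dist \<nu> x y) | x y. x \<in> P \<and> y \<in> P \<and> x \<noteq> y}"

definition hamming_sphere :: "nat \<Rightarrow> (nat \<Rightarrow> 'a::zero) \<Rightarrow> int \<Rightarrow> (nat \<Rightarrow> 'a) set" where
  "hamming_sphere \<nu> x t = {y \<in> coord_space \<nu>. int (hamming_dist \<nu> x y) = t}"

definition linear_on_coord ::
  "('a::field \<Rightarrow> 'v::ab_group_add \<Rightarrow> 'v) \<Rightarrow> nat \<Rightarrow> ((nat \<Rightarrow> 'a) \<Rightarrow> 'v) \<Rightarrow> bool" where
  "linear_on_coord scale \<nu> \<phi> \<longleftrightarrow>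
     (\<forall>x \<in> coord_space \<nu>. \<forall>y \<in> coord_space \<nu>. \<phi> (\<lambda>i. x i + y i) = \<phi> x + \<phi> y) \<and>
     (\<forall>c. \<forall>x \<in> coord_space \<nu>. \<phi> (\<lambda>i. c * x i) = scale c (\<phi> x))"

definition projective_point_family ::
  "('a::field \<Rightarrow> 'v::ab_group_add \<Rightarrow> 'v) \<Rightarrow> 'v set \<Rightarrow> bool" where
  "projective_point_family scale F \<longleftrightarrow>
     0 \<notin> F \<and> (\<forall>f \<in> F. \<forall>g \<in> F. f \<noteq> g \<longrightarrow> \<not> module.dependent scale {f, g})"

definition wt_F :: "('a::field \<Rightarrow> 'v::ab_group_add \<Rightarrow> 'v) \<Rightarrow> 'v set \<Rightarrow> 'v \<Rightarrow> enat" where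
  "wt_F scale F v = Inf ({enat (card I) | I. I \<subseteq> F \<and> v \<in> module.span scale I} \<union> {\<infinity>})"

definition parent_function ::
  "('a::field \<Rightarrow> 'v::ab_group_add \<Rightarrow> 'v) \<Rightarrow> 'v set \<Rightarrow> nat \<Rightarrow> ((nat \<Rightarrow> 'a) \<Rightarrow> 'v) \<Rightarrow> bool" where
  "parent_function scale F \<nu> \<phi> \<longleftrightarrow>
     linear_on_coord scale \<nu> \<phi> \<and>
     {module.span scale {\<phi> (unit_vec i)} | i. i < \<nu>} = {module.span scale {f} | f. f \<in> F}"

definition parent_code :: "nat \<Rightarrow> ((nat \<Rightarrow> 'a::zero) \<Rightarrow> 'v::zero) \<Rightarrow> (nat \<Rightarrow> 'a) set" where
  "parent_code \<nu> \<phi> = {x \<in> coord_space \<nu>. \<phi> x = 0}"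

definition F_sphere ::
  "('a::field \<Rightarrow> 'v::ab_group_add \<Rightarrow> 'v) \<Rightarrow> 'v set \<Rightarrow> 'v \<Rightarrow> int \<Rightarrow> 'v set" where
  "F_sphere scale F w t = {w + v | v. t \<ge> 0 \<and> wt_F scale F v = enat (nat t)}"

end

theory Submission
  imports Defs
begin

(* wt_F(v) is the least Hamming weight of a preimage of v under \<phi>: since \<phi> is linear and each
   \<phi>(e_i) spans the same line as some point of F and conversely, the spans of s points of F are
   the spans of s images \<phi>(e_i), i.e. images of vectors of weight at most s.
   If every nonzero word of P = ker \<phi> has weight > 2t, two vectors of weight at most t with the
   same image coincide, so a vector z of weight at most t is the unique lightest preimage of \<phi> z
   and wt_F(\<phi> z) = wt_H(z). Hence \<phi> maps the vectors of Hamming weight t bijectively onto the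
   vectors of F-weight t, and translating by x gives the spheres. *)

definition coord_supp :: "nat \<Rightarrow> (nat \<Rightarrow> 'a::zero) \<Rightarrow> nat set" where
  "coord_supp \<nu> z = {i. i < \<nu> \<and> z i \<noteq> 0}"

lemma finite_coord_supp [simp]: "finite (coord_supp \<nu> z)"
  unfolding coord_supp_def by simp

definition hamming_weight :: "nat \<Rightarrow> (nat \<Rightarrow> 'a::zero) \<Rightarrow> nat" where
  "hamming_weight \<nu> z = card (coord_supp \<nu> z)"

lemma hamming_dist_eq_weight_diff:
  "hamming_dist \<nu> x y = hamming_weight \<nu> (\<lambda>i. y i - (x i :: 'a::ab_group_add))"
  unfolding hamming_dist_def hamming_weight_def coord_supp_def by (metis right_minus_eq)

lemma hamming_weight_diff_le:
  "hamming_weight \<nu> (\<lambda>i. a i - (b i :: 'a::ab_group_add)) \<le> hamming_weight \<nu> a + hamming_weight \<nu> b"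
proof -
  have "coord_supp \<nu> (\<lambda>i. a i - b i) \<subseteq> coord_supp \<nu> a \<union> coord_supp \<nu> b"
    unfolding coord_supp_def by auto
  then have "hamming_weight \<nu> (\<lambda>i. a i - b i) \<le> card (coord_supp \<nu> a \<union> coord_supp \<nu> b)"
    unfolding hamming_weight_def by (intro card_mono) auto
  also have "\<dots> \<le> hamming_weight \<nu> a + hamming_weight \<nu> b"
    unfolding hamming_weight_def by (rule card_Un_le)
  finally show ?thesis .
qed

lemma min_hamming_dist_le_weight:
  assumes "(\<lambda>i. 0) \<in> P" "p \<in> P" "p \<noteq> (\<lambda>i. 0)"
  shows "min_hamming_dist \<nu> P \<le> enat (hamming_weight \<nu> p)"
proof -
  have "hamming_weight \<nu> p = hamming_dist \<nu> (\<lambda>i. 0) p"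
    unfolding hamming_dist_def hamming_weight_def coord_supp_def by (rule arg_cong[where f = card]) auto
  then show ?thesis
    unfolding min_hamming_dist_def using assms by (auto intro!: Inf_lower)
qed

lemma coord_space_add: "x \<in> coord_space \<nu> \<Longrightarrow> y \<in> coord_space \<nu> \<Longrightarrow>
    (\<lambda>i. x i + (y i :: 'a::monoid_add)) \<in> coord_space \<nu>"
  unfolding coord_space_def by auto

lemma coord_space_diff: "x \<in> coord_space \<nu> \<Longrightarrow> y \<in> coord_space \<nu> \<Longrightarrow>
    (\<lambda>i. x i - (y i :: 'a::group_add)) \<in> coord_space \<nu>"
  unfolding coord_space_def by auto

lemma coord_space_mult: "x \<in> coord_space \<nu> \<Longrightarrow> (\<lambda>i. c * (x i :: 'a::mult_zero)) \<in> coord_space \<nu>"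
  unfolding coord_space_def by auto

lemma coord_space_sum:
  "(\<And>k. k \<in> K \<Longrightarrow> h k \<in> coord_space \<nu>) \<Longrightarrow>
    (\<lambda>j. \<Sum>k\<in>K. h k j :: 'a::comm_monoid_add) \<in> coord_space \<nu>"
  unfolding coord_space_def by auto

lemma unit_vec_in_coord_space: "i < \<nu> \<Longrightarrow> unit_vec i \<in> coord_space \<nu>"
  unfolding coord_space_def unit_vec_def by auto

lemma coord_expansion:
  assumes "finite J" "\<And>i. i \<notin> J \<Longrightarrow> z i = 0"
  shows "z = (\<lambda>j. \<Sum>i\<in>J. z i * unit_vec i j :: 'a::semiring_1)"
proof
  fix j
  have "(\<Sum>i\<in>J. z i * unit_vec i j) = (\<Sum>i\<in>J. if i = j then z j else 0)"
    by (rule sum.cong) (auto simp: unit_vec_def)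
  then show "z j = (\<Sum>i\<in>J. z i * unit_vec i j)"
    using assms by auto
qed

context
  fixes scale :: "'a::field \<Rightarrow> 'v::ab_group_add \<Rightarrow> 'v" and \<nu> :: nat and \<phi> :: "(nat \<Rightarrow> 'a) \<Rightarrow> 'v"
  assumes lin: "linear_on_coord scale \<nu> \<phi>"
begin

lemma linear_on_coord_add:
  "x \<in> coord_space \<nu> \<Longrightarrow> y \<in> coord_space \<nu> \<Longrightarrow> \<phi> (\<lambda>i. x i + y i) = \<phi> x + \<phi> y"
  using lin unfolding linear_on_coord_def by blast

lemma linear_on_coord_scale:
  "x \<in> coord_space \<nu> \<Longrightarrow> \<phi> (\<lambda>i. c * x i) = scale c (\<phi> x)"
  using lin unfolding linear_on_coord_def by blast

lemma linear_on_coord_zero: "\<phi> (\<lambda>i. 0) = 0"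
proof -
  have "(\<lambda>i. 0) \<in> coord_space \<nu>" unfolding coord_space_def by simp
  from linear_on_coord_add[OF this this] show ?thesis by simp
qed

lemma linear_on_coord_diff:
  assumes "x \<in> coord_space \<nu>" "y \<in> coord_space \<nu>"
  shows "\<phi> (\<lambda>i. x i - y i) = \<phi> x - \<phi> y"
  using linear_on_coord_add[OF coord_space_diff[OF assms] assms(2)] by (simp add: eq_diff_eq)

lemma linear_on_coord_sum:
  "finite K \<Longrightarrow> (\<And>k. k \<in> K \<Longrightarrow> h k \<in> coord_space \<nu>) \<Longrightarrow>
    \<phi> (\<lambda>j. \<Sum>k\<in>K. h k j) = (\<Sum>k\<in>K. \<phi> (h k))"
proof (induction K rule: finite_induct)
  case empty
  show ?case using linear_on_coord_zero by simp
next
  case (insert a K)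
  then show ?case
    using linear_on_coord_add[of "h a" "\<lambda>j. \<Sum>k\<in>K. h k j"] coord_space_sum[of K h \<nu>] by simp
qed

lemma linear_on_coord_expansion:
  assumes "J \<subseteq> {..<\<nu>}" "\<And>i. i \<notin> J \<Longrightarrow> z i = 0"
  shows "\<phi> z = (\<Sum>i\<in>J. scale (z i) (\<phi> (unit_vec i)))"
proof -
  have J: "finite J" using assms(1) finite_subset by blast
  have units: "\<And>i. i \<in> J \<Longrightarrow> unit_vec i \<in> coord_space \<nu>"
    using assms(1) unit_vec_in_coord_space by blast
  have "\<phi> z = \<phi> (\<lambda>j. \<Sum>i\<in>J. z i * unit_vec i j)"
    using coord_expansion[OF J assms(2)] by simp
  also have "\<dots> = (\<Sum>i\<in>J. \<phi> (\<lambda>j. z i * unit_vec i j))"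
    using J units by (intro linear_on_coord_sum) (auto intro: coord_space_mult)
  also have "\<dots> = (\<Sum>i\<in>J. scale (z i) (\<phi> (unit_vec i)))"
    using units by (intro sum.cong refl linear_on_coord_scale)
  finally show ?thesis .
qed

lemma eq_if_image_eq_low_weight:
  assumes code: "\<forall>p\<in>parent_code \<nu> \<phi>. p \<noteq> (\<lambda>i. 0) \<longrightarrow> k < hamming_weight \<nu> p"
    and y: "y \<in> coord_space \<nu>" and z: "z \<in> coord_space \<nu>" and "\<phi> y = \<phi> z"
    and weights: "hamming_weight \<nu> y + hamming_weight \<nu> z \<le> k"
  shows "y = z"
proof -
  let ?p = "\<lambda>i. y i - z i"
  have "?p \<in> parent_code \<nu> \<phi>"
    using linear_on_coord_diff[OF y z] coord_space_diff[OF y z] \<open>\<phi> y = \<phi> z\<close>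
    unfolding parent_code_def by simp
  moreover have "hamming_weight \<nu> ?p \<le> k"
    using hamming_weight_diff_le[of \<nu> y z] weights by simp
  ultimately have "?p = (\<lambda>i. 0)"
    using code by (meson not_le)
  then show ?thesis
    by (simp add: fun_eq_iff)
qed

end

lemma wt_F_le_card:
  "I \<subseteq> F \<Longrightarrow> v \<in> module.span scale I \<Longrightarrow> wt_F scale F v \<le> enat (card I)"
  unfolding wt_F_def by (rule Inf_lower) blast

lemma wt_F_attained:
  assumes "wt_F scale F v = enat s"
  shows "\<exists>I \<subseteq> F. v \<in> module.span scale I \<and> card I = s"
proof -
  let ?W = "{enat (card I) | I. I \<subseteq> F \<and> v \<in> module.span scale I} \<union> {\<infinity>}"
  have "Inf ?W = (LEAST w. w \<in> ?W)"
    unfolding Inf_enat_def by simp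
  also have "\<dots> \<in> ?W"
    by (rule LeastI[of _ \<infinity>]) simp
  finally have "Inf ?W \<in> ?W" .
  then have "enat s \<in> ?W"
    using assms unfolding wt_F_def by simp
  then show ?thesis by auto
qed

lemma (in module) span_subset_span_if_same_lines:
  assumes "\<And>s. s \<in> S \<Longrightarrow> \<exists>t\<in>T. span {s} = span {t}"
  shows "span S \<subseteq> span T"
proof (rule span_minimal[OF subsetI subspace_span])
  fix s assume "s \<in> S"
  then obtain t where "t \<in> T" "span {s} = span {t}"
    using assms by blast
  then have "s \<in> span {t}"
    using span_base[of s "{s}"] by simp
  also have "\<dots> \<subseteq> span T"
    using \<open>t \<in> T\<close> by (intro span_mono) simp
  finally show "s \<in> span T" .
qed

locale parent_map = vector_space scale
  for scale :: "'a::field \<Rightarrow> 'v::ab_group_add \<Rightarrow> 'v" +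
  fixes F :: "'v set" and \<nu> :: nat and \<phi> :: "(nat \<Rightarrow> 'a) \<Rightarrow> 'v"
  assumes parent: "parent_function scale F \<nu> \<phi>"
    and finite_F: "finite F"
begin

lemma linear: "linear_on_coord scale \<nu> \<phi>"
  using parent unfolding parent_function_def by simp

lemma span_image_unit_vecs:
  assumes "J \<subseteq> {..<\<nu>}"
  shows "span (\<phi> ` unit_vec ` J) = \<phi> ` {z. \<forall>i. i \<notin> J \<longrightarrow> z i = 0}"
proof
  let ?Z = "{z. \<forall>i. i \<notin> J \<longrightarrow> z i = 0}"
  have Z: "?Z \<subseteq> coord_space \<nu>"
    using assms unfolding coord_space_def by auto
  have "subspace (\<phi> ` ?Z)"
    unfolding subspace_def
  proof (intro conjI ballI allI)
    show "0 \<in> \<phi> ` ?Z"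
      using linear_on_coord_zero[OF linear] by (auto intro!: image_eqI[where x = "\<lambda>i. 0"])
    fix c u w assume "u \<in> \<phi> ` ?Z" "w \<in> \<phi> ` ?Z"
    then obtain y z where "y \<in> ?Z" "z \<in> ?Z" and uw: "u = \<phi> y" "w = \<phi> z"
      by blast
    with Z have "y \<in> coord_space \<nu>" "z \<in> coord_space \<nu>" by blast+
    with uw have sum: "u + w = \<phi> (\<lambda>i. y i + z i)" and mult: "scale c u = \<phi> (\<lambda>i. c * y i)"
      using linear_on_coord_add[OF linear] linear_on_coord_scale[OF linear] by auto
    have "(\<lambda>i. y i + z i) \<in> ?Z" "(\<lambda>i. c * y i) \<in> ?Z"
      using \<open>y \<in> ?Z\<close> \<open>z \<in> ?Z\<close> by auto
    then show "u + w \<in> \<phi> ` ?Z" and "scale c u \<in> \<phi> ` ?Z"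
      unfolding sum mult by blast+
  qed
  moreover have "unit_vec ` J \<subseteq> ?Z"
    by (auto simp: unit_vec_def)
  then have "\<phi> ` unit_vec ` J \<subseteq> \<phi> ` ?Z"
    by (rule image_mono)
  ultimately show "span (\<phi> ` unit_vec ` J) \<subseteq> \<phi> ` ?Z"
    by (rule span_minimal[rotated])
  show "\<phi> ` ?Z \<subseteq> span (\<phi> ` unit_vec ` J)"
  proof
    fix w assume "w \<in> \<phi> ` ?Z"
    then obtain z where "z \<in> ?Z" "w = \<phi> z" by blast
    then have "w = (\<Sum>i\<in>J. scale (z i) (\<phi> (unit_vec i)))"
      using linear_on_coord_expansion[OF linear assms] by simp
    then show "w \<in> span (\<phi> ` unit_vec ` J)"
      by (simp add: span_sum span_scale span_base)
  qed
qed

lemma parent_lines_eq: "{span {\<phi> (unit_vec i)} | i. i < \<nu>} = {span {f} | f. f \<in> F}"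
  using parent unfolding parent_function_def by simp

lemma unit_vec_image_line_in_F:
  assumes "i < \<nu>"
  obtains f where "f \<in> F" "span {\<phi> (unit_vec i)} = span {f}"
proof -
  have "span {\<phi> (unit_vec i)} \<in> {span {f} | f. f \<in> F}"
    unfolding parent_lines_eq[symmetric] using assms by blast
  then show thesis
    using that by blast
qed

lemma F_line_unit_vec_image:
  assumes "f \<in> F"
  obtains i where "i < \<nu>" "span {f} = span {\<phi> (unit_vec i)}"
proof -
  have "span {f} \<in> {span {\<phi> (unit_vec i)} | i. i < \<nu>}"
    unfolding parent_lines_eq using assms by blast
  then show thesis
    using that by blast
qed

lemma wt_F_le_card_unit_images:
  assumes J: "J \<subseteq> {..<\<nu>}" and v: "v \<in> span (\<phi> ` unit_vec ` J)"
  shows "wt_F scale F v \<le> enat (card J)"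
proof -
  have "\<forall>i\<in>J. \<exists>f\<in>F. span {\<phi> (unit_vec i)} = span {f}"
    using J unit_vec_image_line_in_F by (metis lessThan_iff subsetD)
  then obtain f where f: "\<And>i. i \<in> J \<Longrightarrow> f i \<in> F \<and> span {\<phi> (unit_vec i)} = span {f i}"
    by metis
  have "span (\<phi> ` unit_vec ` J) \<subseteq> span (f ` J)"
    using f by (intro span_subset_span_if_same_lines) auto
  with v have "wt_F scale F v \<le> enat (card (f ` J))"
    using f by (intro wt_F_le_card) auto
  also have "\<dots> \<le> enat (card J)"
    using finite_subset[OF J] by (simp add: card_image_le)
  finally show ?thesis .
qed

lemma wt_F_attained_unit_images:
  assumes "wt_F scale F v = enat s"
  obtains J where "J \<subseteq> {..<\<nu>}" "card J \<le> s" "v \<in> span (\<phi> ` unit_vec ` J)"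
proof -
  obtain I where I: "I \<subseteq> F" "v \<in> span I" "card I = s"
    using wt_F_attained[OF assms] by blast
  have "\<forall>f\<in>I. \<exists>i<\<nu>. span {f} = span {\<phi> (unit_vec i)}"
    using I(1) F_line_unit_vec_image by (metis subsetD)
  then obtain ix where ix: "\<And>f. f \<in> I \<Longrightarrow> ix f < \<nu> \<and> span {f} = span {\<phi> (unit_vec (ix f))}"
    by metis
  have "span I \<subseteq> span (\<phi> ` unit_vec ` ix ` I)"
    using ix by (intro span_subset_span_if_same_lines) auto
  moreover have "card (ix ` I) \<le> s"
    using I card_image_le finite_subset[OF I(1) finite_F] by blast
  moreover have "ix ` I \<subseteq> {..<\<nu>}"
    using ix by auto
  ultimately show thesis
    using that I(2) by blast
qed

lemma wt_F_le_hamming_weight: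
  assumes z: "z \<in> coord_space \<nu>"
  shows "wt_F scale F (\<phi> z) \<le> enat (hamming_weight \<nu> z)"
proof -
  have supp: "coord_supp \<nu> z \<subseteq> {..<\<nu>}"
    unfolding coord_supp_def by auto
  have "\<forall>i. i \<notin> coord_supp \<nu> z \<longrightarrow> z i = 0"
    using z unfolding coord_supp_def coord_space_def by (auto simp: not_less[symmetric])
  then have "\<phi> z \<in> span (\<phi> ` unit_vec ` coord_supp \<nu> z)"
    unfolding span_image_unit_vecs[OF supp] by blast
  with supp show ?thesis
    unfolding hamming_weight_def by (rule wt_F_le_card_unit_images)
qed

lemma wt_F_attained_preimage:
  assumes "wt_F scale F v = enat s"
  obtains z where "z \<in> coord_space \<nu>" "\<phi> z = v" "hamming_weight \<nu> z \<le> s"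
proof -
  obtain J where J: "J \<subseteq> {..<\<nu>}" "card J \<le> s" "v \<in> span (\<phi> ` unit_vec ` J)"
    using assms by (rule wt_F_attained_unit_images)
  obtain z where z: "\<forall>i. i \<notin> J \<longrightarrow> z i = 0" "\<phi> z = v"
    using J(3) unfolding span_image_unit_vecs[OF J(1)] by blast
  have "z \<in> coord_space \<nu>"
    using J(1) z(1) unfolding coord_space_def mem_Collect_eq by (meson lessThan_iff not_le subsetD)
  moreover have "coord_supp \<nu> z \<subseteq> J"
    using z(1) unfolding coord_supp_def by blast
  then have "hamming_weight \<nu> z \<le> card J"
    unfolding hamming_weight_def using finite_subset[OF J(1) finite_lessThan] by (rule card_mono[rotated])
  with J(2) have "hamming_weight \<nu> z \<le> s"
    by simp
  ultimately show thesis
    using that z(2) by blast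
qed

lemma wt_F_eq_hamming_weight:
  assumes code: "\<forall>p\<in>parent_code \<nu> \<phi>. p \<noteq> (\<lambda>i. 0) \<longrightarrow> k < hamming_weight \<nu> p"
    and z: "z \<in> coord_space \<nu>" and small: "2 * hamming_weight \<nu> z \<le> k"
  shows "wt_F scale F (\<phi> z) = enat (hamming_weight \<nu> z)"
proof (rule antisym)
  show "wt_F scale F (\<phi> z) \<le> enat (hamming_weight \<nu> z)"
    using z by (rule wt_F_le_hamming_weight)
  show "enat (hamming_weight \<nu> z) \<le> wt_F scale F (\<phi> z)"
  proof (rule ccontr)
    assume "\<not> enat (hamming_weight \<nu> z) \<le> wt_F scale F (\<phi> z)"
    then obtain s where s: "wt_F scale F (\<phi> z) = enat s" "s < hamming_weight \<nu> z"
      by (cases "wt_F scale F (\<phi> z)") auto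
    obtain y where y: "y \<in> coord_space \<nu>" "\<phi> y = \<phi> z" "hamming_weight \<nu> y \<le> s"
      using wt_F_attained_preimage[OF s(1)] .
    have "y = z"
      using y(3) s(2) small
      by (intro eq_if_image_eq_low_weight[OF linear code y(1) z y(2)]) linarith
    with y(3) s(2) show False by simp
  qed
qed

lemma bij_betw_hamming_weight_wt_F:
  assumes code: "\<forall>p\<in>parent_code \<nu> \<phi>. p \<noteq> (\<lambda>i. 0) \<longrightarrow> k < hamming_weight \<nu> p"
    and small: "2 * n \<le> k"
  shows "bij_betw \<phi> {z \<in> coord_space \<nu>. hamming_weight \<nu> z = n} {v. wt_F scale F v = enat n}"
  unfolding bij_betw_def
proof (intro conjI inj_onI equalityI subsetI)
  fix y z assume "y \<in> {z \<in> coord_space \<nu>. hamming_weight \<nu> z = n}"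
    "z \<in> {z \<in> coord_space \<nu>. hamming_weight \<nu> z = n}" "\<phi> y = \<phi> z"
  with small show "y = z"
    using eq_if_image_eq_low_weight[OF linear code] by simp
next
  fix v assume "v \<in> \<phi> ` {z \<in> coord_space \<nu>. hamming_weight \<nu> z = n}"
  with small show "v \<in> {v. wt_F scale F v = enat n}"
    using wt_F_eq_hamming_weight[OF code] by auto
next
  fix v assume "v \<in> {v. wt_F scale F v = enat n}"
  then have wt: "wt_F scale F v = enat n" by simp
  then obtain z where z: "z \<in> coord_space \<nu>" "\<phi> z = v" "hamming_weight \<nu> z \<le> n"
    by (rule wt_F_attained_preimage)
  have "n \<le> hamming_weight \<nu> z"
    using wt_F_le_hamming_weight[OF z(1)] z(2) wt by simp
  with z show "v \<in> \<phi> ` {z \<in> coord_space \<nu>. hamming_weight \<nu> z = n}"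
    by force
qed

end

lemma bij_betw_translate_hamming_sphere:
  assumes x: "x \<in> coord_space \<nu>"
  shows "bij_betw (\<lambda>z i. x i + z i) {z \<in> coord_space \<nu>. hamming_weight \<nu> z = n}
    (hamming_sphere \<nu> x (int n) :: (nat \<Rightarrow> 'a::ab_group_add) set)"
proof (rule bij_betw_byWitness[where f' = "\<lambda>y i. y i - x i"])
  show "(\<lambda>z i. x i + z i) ` {z \<in> coord_space \<nu>. hamming_weight \<nu> z = n} \<subseteq> hamming_sphere \<nu> x (int n)"
    using x by (auto simp: hamming_sphere_def hamming_dist_eq_weight_diff coord_space_add)
  show "(\<lambda>y i. y i - x i) ` hamming_sphere \<nu> x (int n) \<subseteq> {z \<in> coord_space \<nu>. hamming_weight \<nu> z = n}"
    using x by (auto simp: hamming_sphere_def hamming_dist_eq_weight_diff coord_space_diff)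
qed simp_all

lemma F_sphere_of_nat:
  "F_sphere scale F w (int n) = (+) w ` {v. wt_F scale F v = enat n}"
  unfolding F_sphere_def by auto

lemma twice_lt_weight_of_min_hamming_dist:
  assumes "(\<lambda>i. 0) \<in> P" "p \<in> P" "p \<noteq> (\<lambda>i. 0)"
    and t: "min_hamming_dist \<nu> P = \<infinity> \<or>
            (\<exists>d. min_hamming_dist \<nu> P = enat d \<and> t \<le> \<lfloor>(real d - 1) / 2\<rfloor>)"
  shows "2 * t < int (hamming_weight \<nu> p)"
proof -
  have le: "min_hamming_dist \<nu> P \<le> enat (hamming_weight \<nu> p)"
    using assms(1-3) by (rule min_hamming_dist_le_weight)
  then obtain d where d: "min_hamming_dist \<nu> P = enat d" "t \<le> \<lfloor>(real d - 1) / 2\<rfloor>"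
    using t by auto
  have "real d \<le> real (hamming_weight \<nu> p)"
    using le d(1) by simp
  moreover have "real_of_int t \<le> (real d - 1) / 2"
    using d(2) le_floor_iff by blast
  ultimately have "real_of_int (2 * t) < real_of_int (int (hamming_weight \<nu> p))"
    by simp
  then show ?thesis
    by (simp only: of_int_less_iff)
qed

theorem proposition6p1:
  fixes scale :: "'a::{field,finite} \<Rightarrow> 'v::ab_group_add \<Rightarrow> 'v"
    and F :: "'v set" and \<nu> :: nat and \<phi> :: "(nat \<Rightarrow> 'a) \<Rightarrow> 'v"
    and x :: "nat \<Rightarrow> 'a" and t :: int
  assumes vs: "vector_space scale"
    and findim: "\<exists>B. finite B \<and> module.span scale B = UNIV"
    and ppf: "projective_point_family scale F"
    and finF: "finite F" and cardF: "card F = \<nu>"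
    and parent: "parent_function scale F \<nu> \<phi>"
    and x: "x \<in> coord_space \<nu>"
    and t: "min_hamming_dist \<nu> (parent_code \<nu> \<phi>) = \<infinity> \<or>
            (\<exists>d. min_hamming_dist \<nu> (parent_code \<nu> \<phi>) = enat d \<and>
                 t \<le> \<lfloor>(real d - 1) / 2\<rfloor>)"
  shows "bij_betw \<phi> (hamming_sphere \<nu> x t) (F_sphere scale F (\<phi> x) t)"
proof (cases "t < 0")
  case True
  then show ?thesis
    by (simp add: hamming_sphere_def F_sphere_def bij_betw_def)
next
  case False
  then obtain n where n: "t = int n"
    using nonneg_int_cases by (metis not_less)
  interpret parent_map scale F \<nu> \<phi>
    using vs parent finF by (simp add: parent_map_def parent_map_axioms_def)
  have zero: "(\<lambda>i. 0) \<in> parent_code \<nu> \<phi>"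
    using linear_on_coord_zero[OF linear] by (simp add: parent_code_def coord_space_def)
  have code: "\<forall>p\<in>parent_code \<nu> \<phi>. p \<noteq> (\<lambda>i. 0) \<longrightarrow> 2 * n < hamming_weight \<nu> p"
  proof (intro ballI impI)
    fix p assume "p \<in> parent_code \<nu> \<phi>" "p \<noteq> (\<lambda>i. 0)"
    with zero have "2 * t < int (hamming_weight \<nu> p)"
      by (rule twice_lt_weight_of_min_hamming_dist[OF _ _ _ t])
    then show "2 * n < hamming_weight \<nu> p"
      unfolding n by linarith
  qed
  let ?W = "{z \<in> coord_space \<nu>. hamming_weight \<nu> z = n}"
  have "bij_betw \<phi> ?W {v. wt_F scale F v = enat n}"
    using code by (rule bij_betw_hamming_weight_wt_F) simp
  then have "bij_betw ((+) (\<phi> x) \<circ> \<phi>) ?W (F_sphere scale F (\<phi> x) (int n))"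
    unfolding F_sphere_of_nat by (rule bij_betw_trans) simp
  moreover have "bij_betw (\<phi> \<circ> (\<lambda>z i. x i + z i)) ?W (F_sphere scale F (\<phi> x) (int n)) =
      bij_betw ((+) (\<phi> x) \<circ> \<phi>) ?W (F_sphere scale F (\<phi> x) (int n))"
    using linear_on_coord_add[OF linear x] by (intro bij_betw_cong) simp
  ultimately show ?thesis
    unfolding n bij_betw_comp_iff[OF bij_betw_translate_hamming_sphere[OF x]] by simp
qed

end
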